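(* Let $G$ be a finite connected graph and $\alpha\ge 1$ an integer. If $H$ is the disjoint union of $\alpha$ copies of $G$, then $D(H)=\min\{k : D(G,k)\ge \alpha\}$.
   Context: A $k$-labeling of a graph $G$ is a map $\phi:V(G)\to\{1,\dots,k\}$; an automorphism $\pi$ preserves $\phi$ if $\phi(\pi(v))=\phi(v)$ for all $v$; $\phi$ is distinguishing if only the identity automorphism preserves it. Two distinguishing $k$-labelings $\phi,\phi'$ are equivalent if some automorphism $\pi$ satisfies $\phi'(\pi(v))=\phi(v)$ for all $v$; $D(G,k)$ is the number of equivalence classes of distinguishing $k$-labelings of $G$. $D(H)$ is the smallest $k$ such that $H$ has a distinguishing $k$-labeling. *)

theory Defs
  imports "HOL-Library.FuncSet"
begin

text \<open>A finite simple graph is given by a vertex set V and an adjacency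
relation E (only its restriction to V matters).\<close>

definition simple_graph :: "'a set \<Rightarrow> ('a \<Rightarrow> 'a \<Rightarrow> bool) \<Rightarrow> bool" where
  "simple_graph V E \<longleftrightarrow> finite V \<and> (\<forall>u\<in>V. \<forall>v\<in>V. E u v \<longrightarrow> E v u) \<and> (\<forall>v\<in>V. \<not> E v v)"

definition connected_graph :: "'a set \<Rightarrow> ('a \<Rightarrow> 'a \<Rightarrow> bool) \<Rightarrow> bool" where
  "connected_graph V E \<longleftrightarrow> V \<noteq> {} \<and>
     (\<forall>u\<in>V. \<forall>v\<in>V. (u, v) \<in> {(x, y). x \<in> V \<and> y \<in> V \<and> E x y}\<^sup>*)"

definition auts :: "'a set \<Rightarrow> ('a \<Rightarrow> 'a \<Rightarrow> bool) \<Rightarrow> ('a \<Rightarrow> 'a) set" where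
  "auts V E = {\<pi>. bij_betw \<pi> V V \<and> (\<forall>x. x \<notin> V \<longrightarrow> \<pi> x = x) \<and>
                  (\<forall>u\<in>V. \<forall>v\<in>V. E u v \<longleftrightarrow> E (\<pi> u) (\<pi> v))}"

definition labelings :: "'a set \<Rightarrow> nat \<Rightarrow> ('a \<Rightarrow> nat) set" where
  "labelings V k = V \<rightarrow>\<^sub>E {1..k}"

definition preserves :: "'a set \<Rightarrow> ('a \<Rightarrow> 'a) \<Rightarrow> ('a \<Rightarrow> nat) \<Rightarrow> bool" where
  "preserves V \<pi> \<phi> \<longleftrightarrow> (\<forall>v\<in>V. \<phi> (\<pi> v) = \<phi> v)"

definition distinguishing :: "'a set \<Rightarrow> ('a \<Rightarrow> 'a \<Rightarrow> bool) \<Rightarrow> nat \<Rightarrow> ('a \<Rightarrow> nat) \<Rightarrow> bool" where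
  "distinguishing V E k \<phi> \<longleftrightarrow> \<phi> \<in> labelings V k \<and>
     (\<forall>\<pi>\<in>auts V E. preserves V \<pi> \<phi> \<longrightarrow> \<pi> = id)"

definition dist_labelings :: "'a set \<Rightarrow> ('a \<Rightarrow> 'a \<Rightarrow> bool) \<Rightarrow> nat \<Rightarrow> ('a \<Rightarrow> nat) set" where
  "dist_labelings V E k = {\<phi>. distinguishing V E k \<phi>}"

definition lab_equiv :: "'a set \<Rightarrow> ('a \<Rightarrow> 'a \<Rightarrow> bool) \<Rightarrow> nat \<Rightarrow> (('a \<Rightarrow> nat) \<times> ('a \<Rightarrow> nat)) set" where
  "lab_equiv V E k = {(\<phi>, \<phi>'). \<phi> \<in> dist_labelings V E k \<and> \<phi>' \<in> dist_labelings V E k \<and>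
      (\<exists>\<pi>\<in>auts V E. \<forall>v\<in>V. \<phi>' (\<pi> v) = \<phi> v)}"

definition D_count :: "'a set \<Rightarrow> ('a \<Rightarrow> 'a \<Rightarrow> bool) \<Rightarrow> nat \<Rightarrow> nat" where
  "D_count V E k = card (dist_labelings V E k // lab_equiv V E k)"

definition dist_number :: "'a set \<Rightarrow> ('a \<Rightarrow> 'a \<Rightarrow> bool) \<Rightarrow> nat" where
  "dist_number V E = (LEAST k. \<exists>\<phi>. distinguishing V E k \<phi>)"

definition copies_V :: "'a set \<Rightarrow> nat \<Rightarrow> ('a \<times> nat) set" where
  "copies_V V \<alpha> = V \<times> {0..<\<alpha>}"

definition copies_E :: "('a \<Rightarrow> 'a \<Rightarrow> bool) \<Rightarrow> ('a \<times> nat) \<Rightarrow> ('a \<times> nat) \<Rightarrow> bool" where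
  "copies_E E x y \<longleftrightarrow> snd x = snd y \<and> E (fst x) (fst y)"

end

theory Submission
  imports Defs
begin

text \<open>An automorphism of the disjoint union of \<open>\<alpha>\<close> copies of a connected graph G maps
  each copy onto a copy, acting there as an automorphism of G. Hence a k-labeling of the union
  is distinguishing iff its restrictions to the copies are distinguishing k-labelings of G that
  are pairwise inequivalent: a nontrivial automorphism of G preserving one restriction, or an
  automorphism carrying one restriction to another, lifts to a nontrivial automorphism of the
  union preserving the labeling. A family of \<open>\<alpha>\<close> such labelings exists iff there are at
  least \<open>\<alpha>\<close> equivalence classes, that is, iff D(G,k) \<open>\<ge> \<alpha>\<close>.\<close>

lemma id_in_auts: "id \<in> auts V E"
  by (simp add: auts_def bij_betw_id)

lemma auts_mem: "\<sigma> \<in> auts V E \<Longrightarrow> v \<in> V \<Longrightarrow> \<sigma> v \<in> V"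
  unfolding auts_def using bij_betwE by blast

lemma auts_fixes: "\<sigma> \<in> auts V E \<Longrightarrow> x \<notin> V \<Longrightarrow> \<sigma> x = x"
  unfolding auts_def by blast

lemma auts_edge_iff: "\<sigma> \<in> auts V E \<Longrightarrow> u \<in> V \<Longrightarrow> v \<in> V \<Longrightarrow> E (\<sigma> u) (\<sigma> v) \<longleftrightarrow> E u v"
  unfolding auts_def by blast

lemma auts_eq_id: "\<sigma> \<in> auts V E \<Longrightarrow> (\<And>v. v \<in> V \<Longrightarrow> \<sigma> v = v) \<Longrightarrow> \<sigma> = id"
  using auts_fixes by fastforce

lemma auts_comp:
  assumes "\<sigma> \<in> auts V E" "\<rho> \<in> auts V E"
  shows "\<rho> \<circ> \<sigma> \<in> auts V E"
proof -
  have "bij_betw (\<rho> \<circ> \<sigma>) V V"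
    using assms unfolding auts_def by (blast intro: bij_betw_trans)
  moreover have "\<forall>x. x \<notin> V \<longrightarrow> (\<rho> \<circ> \<sigma>) x = x"
    by (simp add: auts_fixes[OF assms(1)] auts_fixes[OF assms(2)])
  moreover have "\<forall>u\<in>V. \<forall>v\<in>V. E u v \<longleftrightarrow> E ((\<rho> \<circ> \<sigma>) u) ((\<rho> \<circ> \<sigma>) v)"
    by (simp add: auts_edge_iff[OF assms(1)] auts_edge_iff[OF assms(2)] auts_mem[OF assms(1)])
  ultimately show ?thesis unfolding auts_def by blast
qed

lemma auts_bij:
  assumes "\<sigma> \<in> auts V E"
  shows "bij \<sigma>"
proof -
  have "bij_betw \<sigma> (- V) (- V)"
    using auts_fixes[OF assms] by (simp add: bij_betw_def inj_on_def image_def)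
  with bij_betw_combine[of \<sigma> V V] assms show ?thesis
    unfolding auts_def by fastforce
qed

lemma auts_inv:
  assumes \<sigma>: "\<sigma> \<in> auts V E"
  shows "inv \<sigma> \<in> auts V E"
proof -
  have bij: "bij \<sigma>" by (rule auts_bij[OF \<sigma>])
  have "\<sigma> ` V = V" using \<sigma> by (simp add: auts_def bij_betw_def)
  then have "bij_betw (inv \<sigma>) V V"
    using bij_betw_inv_into_subset[OF bij] by blast
  moreover have "inv \<sigma> x = x" if "x \<notin> V" for x
    using auts_fixes[OF \<sigma> that] bij by (metis bij_inv_eq_iff)
  moreover have "E (inv \<sigma> u) (inv \<sigma> v) \<longleftrightarrow> E u v" if "u \<in> V" "v \<in> V" for u v
    using auts_edge_iff[OF \<sigma>] \<open>bij_betw (inv \<sigma>) V V\<close> that bij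
    by (metis bij_betwE bij_inv_eq_iff)
  ultimately show ?thesis unfolding auts_def by auto
qed

lemma equiv_lab_equiv: "equiv (dist_labelings V E k) (lab_equiv V E k)"
proof (rule equivI)
  show "lab_equiv V E k \<subseteq> dist_labelings V E k \<times> dist_labelings V E k"
    unfolding lab_equiv_def by auto
  show "refl_on (dist_labelings V E k) (lab_equiv V E k)"
    by (auto simp: refl_on_def lab_equiv_def intro!: bexI[of _ id] id_in_auts)
  show "sym (lab_equiv V E k)"
  proof (rule symI)
    fix \<phi> \<phi>' assume "(\<phi>, \<phi>') \<in> lab_equiv V E k"
    then obtain \<pi> where \<pi>: "\<pi> \<in> auts V E" "\<forall>v\<in>V. \<phi>' (\<pi> v) = \<phi> v"
      and "\<phi> \<in> dist_labelings V E k" "\<phi>' \<in> dist_labelings V E k"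
      unfolding lab_equiv_def by blast
    moreover have "\<forall>v\<in>V. \<phi> (inv \<pi> v) = \<phi>' v"
      using \<pi> auts_inv[OF \<pi>(1)] auts_bij[OF \<pi>(1)] auts_mem by (metis bij_inv_eq_iff)
    ultimately show "(\<phi>', \<phi>) \<in> lab_equiv V E k"
      unfolding lab_equiv_def using auts_inv by blast
  qed
  show "trans (lab_equiv V E k)"
  proof (rule transI)
    fix \<phi> \<phi>' \<phi>''
    assume "(\<phi>, \<phi>') \<in> lab_equiv V E k" "(\<phi>', \<phi>'') \<in> lab_equiv V E k"
    then obtain \<pi> \<rho> where "\<pi> \<in> auts V E" "\<forall>v\<in>V. \<phi>' (\<pi> v) = \<phi> v"
      and "\<rho> \<in> auts V E" "\<forall>v\<in>V. \<phi>'' (\<rho> v) = \<phi>' v"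
      and "\<phi> \<in> dist_labelings V E k" "\<phi>'' \<in> dist_labelings V E k"
      unfolding lab_equiv_def by blast
    then show "(\<phi>, \<phi>'') \<in> lab_equiv V E k"
      unfolding lab_equiv_def by (auto simp: auts_mem intro!: bexI[of _ "\<rho> \<circ> \<pi>"] auts_comp)
  qed
qed

lemma finite_dist_labelings: "finite V \<Longrightarrow> finite (dist_labelings V E k)"
  by (rule finite_subset[of _ "labelings V k"])
     (auto simp: dist_labelings_def distinguishing_def labelings_def finite_PiE)

lemma le_card_quotient_iff:
  assumes R: "equiv A R" and "finite A"
  shows "n \<le> card (A // R) \<longleftrightarrow>
           (\<exists>f. (\<forall>i<n. f i \<in> A) \<and> (\<forall>i<n. \<forall>j<n. (f i, f j) \<in> R \<longrightarrow> i = j))"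
proof
  have fin: "finite (A // R)" using assms by (simp add: finite_quotient equiv_type)
  assume "n \<le> card (A // R)"
  then obtain h where h: "h ` {..<n} \<subseteq> A // R" "inj_on h {..<n}"
    using card_le_inj[OF _ fin, of "{..<n}"] by auto
  define f where "f i = (SOME x. x \<in> h i)" for i
  have f: "f i \<in> h i" if "i < n" for i
  proof -
    have "h i \<noteq> {}" using in_quotient_imp_non_empty[OF R] h(1) that by blast
    then show ?thesis unfolding f_def by (simp add: some_in_eq)
  qed
  have "f i \<in> A" if "i < n" for i
    using f[OF that] in_quotient_imp_subset[OF R] h(1) that by blast
  moreover have "i = j" if "i < n" "j < n" "(f i, f j) \<in> R" for i j
  proof -
    have "h i = h j"
      using quotient_eq_iff[OF R _ _ f f] h(1) that by blast
    then show ?thesis using h(2) that by (simp add: inj_on_eq_iff)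
  qed
  ultimately show "\<exists>f. (\<forall>i<n. f i \<in> A) \<and> (\<forall>i<n. \<forall>j<n. (f i, f j) \<in> R \<longrightarrow> i = j)"
    by blast
next
  assume "\<exists>f. (\<forall>i<n. f i \<in> A) \<and> (\<forall>i<n. \<forall>j<n. (f i, f j) \<in> R \<longrightarrow> i = j)"
  then obtain f where f: "\<forall>i<n. f i \<in> A" "\<forall>i<n. \<forall>j<n. (f i, f j) \<in> R \<longrightarrow> i = j"
    by blast
  have "inj_on (\<lambda>i. R `` {f i}) {..<n}"
    using f eq_equiv_class_iff[OF R] by (auto simp: inj_on_def)
  moreover have "(\<lambda>i. R `` {f i}) ` {..<n} \<subseteq> A // R"
    using f by (auto intro: quotientI)
  ultimately show "n \<le> card (A // R)"
    using card_inj_on_le assms by (fastforce simp: finite_quotient equiv_type)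
qed

definition copy_labeling :: "'a set \<Rightarrow> ('a \<times> nat \<Rightarrow> nat) \<Rightarrow> nat \<Rightarrow> 'a \<Rightarrow> nat" where
  "copy_labeling V \<phi> i = restrict (\<lambda>v. \<phi> (v, i)) V"

definition glue_labelings :: "'a set \<Rightarrow> nat \<Rightarrow> (nat \<Rightarrow> 'a \<Rightarrow> nat) \<Rightarrow> 'a \<times> nat \<Rightarrow> nat" where
  "glue_labelings V \<alpha> \<psi> = restrict (\<lambda>(v, i). \<psi> i v) (copies_V V \<alpha>)"

lemma copy_labeling_in_labelings:
  "\<phi> \<in> labelings (copies_V V \<alpha>) k \<Longrightarrow> i < \<alpha> \<Longrightarrow> copy_labeling V \<phi> i \<in> labelings V k"
  by (auto simp: labelings_def copy_labeling_def copies_V_def)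

lemma glue_labelings_in_labelings:
  "(\<And>i. i < \<alpha> \<Longrightarrow> \<psi> i \<in> labelings V k) \<Longrightarrow> glue_labelings V \<alpha> \<psi> \<in> labelings (copies_V V \<alpha>) k"
  by (fastforce simp: labelings_def glue_labelings_def copies_V_def PiE_iff)

text \<open>For \<open>i = j\<close> this applies \<open>\<sigma>\<close> inside copy \<open>i\<close> only; otherwise it exchanges
  copies \<open>i\<close> and \<open>j\<close>, via \<open>\<sigma>\<close> one way and \<open>inv \<sigma>\<close> the other.\<close>
definition copy_swap :: "'a set \<Rightarrow> ('a \<Rightarrow> 'a) \<Rightarrow> nat \<Rightarrow> nat \<Rightarrow> 'a \<times> nat \<Rightarrow> 'a \<times> nat" where
  "copy_swap V \<sigma> i j = (\<lambda>(v, l).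
     if v \<in> V \<and> l = i then (\<sigma> v, j) else if v \<in> V \<and> l = j then (inv \<sigma> v, i) else (v, l))"

lemma copy_swap_in_auts:
  assumes \<sigma>: "\<sigma> \<in> auts V E" and "i < \<alpha>" "j < \<alpha>"
  shows "copy_swap V \<sigma> i j \<in> auts (copies_V V \<alpha>) (copies_E E)"
proof -
  have bij: "bij \<sigma>" by (rule auts_bij[OF \<sigma>])
  have \<sigma>': "inv \<sigma> \<in> auts V E" by (rule auts_inv[OF \<sigma>])
  note \<sigma>_props = assms auts_mem[OF \<sigma>] auts_mem[OF \<sigma>']
    inv_f_f[OF bij_is_inj[OF bij]] surj_f_inv_f[OF bij_is_surj[OF bij]]
    auts_edge_iff[OF \<sigma>] auts_edge_iff[OF \<sigma>']
  have V_closed: "\<sigma> ` V \<subseteq> V" "inv \<sigma> ` V \<subseteq> V"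
    using auts_mem[OF \<sigma>] auts_mem[OF \<sigma>'] by blast+
  have swap_mem: "copy_swap V \<rho> l m x \<in> copies_V V \<alpha>"
    if "\<rho> ` V \<subseteq> V" "inv \<rho> ` V \<subseteq> V" "l < \<alpha>" "m < \<alpha>" "x \<in> copies_V V \<alpha>" for \<rho> l m x
    using that by (auto simp: copy_swap_def copies_V_def image_subset_iff)
  have "bij_betw (copy_swap V \<sigma> i j) (copies_V V \<alpha>) (copies_V V \<alpha>)"
  proof (rule bij_betw_byWitness[where f' = "copy_swap V (inv \<sigma>) j i"])
    show "\<forall>x\<in>copies_V V \<alpha>. copy_swap V (inv \<sigma>) j i (copy_swap V \<sigma> i j x) = x"
      using \<sigma>_props by (auto simp: copy_swap_def copies_V_def inv_inv_eq[OF bij])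
    show "\<forall>x\<in>copies_V V \<alpha>. copy_swap V \<sigma> i j (copy_swap V (inv \<sigma>) j i x) = x"
      using \<sigma>_props by (auto simp: copy_swap_def copies_V_def inv_inv_eq[OF bij])
    show "copy_swap V \<sigma> i j ` copies_V V \<alpha> \<subseteq> copies_V V \<alpha>"
      using swap_mem[OF V_closed assms(2,3)] by blast
    show "copy_swap V (inv \<sigma>) j i ` copies_V V \<alpha> \<subseteq> copies_V V \<alpha>"
      using swap_mem[of "inv \<sigma>" j i] V_closed assms(2,3) by (auto simp: inv_inv_eq[OF bij])
  qed
  moreover have "copy_swap V \<sigma> i j x = x" if "x \<notin> copies_V V \<alpha>" for x
    using that assms by (cases x) (auto simp: copy_swap_def copies_V_def)
  moreover have "copies_E E x y \<longleftrightarrow> copies_E E (copy_swap V \<sigma> i j x) (copy_swap V \<sigma> i j y)"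
    if "x \<in> copies_V V \<alpha>" "y \<in> copies_V V \<alpha>" for x y
    using that \<sigma>_props by (auto simp: copy_swap_def copies_V_def copies_E_def split: if_splits)
  ultimately show ?thesis unfolding auts_def by blast
qed

lemma copy_labeling_distinguishing:
  assumes \<phi>: "distinguishing (copies_V V \<alpha>) (copies_E E) k \<phi>" and i: "i < \<alpha>"
  shows "copy_labeling V \<phi> i \<in> dist_labelings V E k"
proof -
  have "\<sigma> = id" if \<sigma>: "\<sigma> \<in> auts V E" and "preserves V \<sigma> (copy_labeling V \<phi> i)" for \<sigma>
  proof -
    have "preserves (copies_V V \<alpha>) (copy_swap V \<sigma> i i) \<phi>"
      using that auts_mem[OF \<sigma>]
      by (auto simp: preserves_def copy_swap_def copy_labeling_def copies_V_def)
    then have "copy_swap V \<sigma> i i = id"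
      using \<phi> copy_swap_in_auts[OF \<sigma> i i] unfolding distinguishing_def by blast
    then have "\<sigma> v = v" if "v \<in> V" for v
      using that fun_cong[of _ _ "(v, i)"] by (fastforce simp: copy_swap_def)
    then show ?thesis using auts_eq_id \<sigma> by blast
  qed
  then show ?thesis
    using \<phi> copy_labeling_in_labelings i unfolding dist_labelings_def distinguishing_def by blast
qed

lemma copy_labelings_inequivalent:
  assumes "V \<noteq> {}" and \<phi>: "distinguishing (copies_V V \<alpha>) (copies_E E) k \<phi>"
    and ij: "i < \<alpha>" "j < \<alpha>"
    and "(copy_labeling V \<phi> i, copy_labeling V \<phi> j) \<in> lab_equiv V E k"
  shows "i = j"
proof (rule ccontr)
  assume "i \<noteq> j"
  obtain \<sigma> where \<sigma>: "\<sigma> \<in> auts V E"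
    and "\<forall>v\<in>V. copy_labeling V \<phi> j (\<sigma> v) = copy_labeling V \<phi> i v"
    using assms(5) unfolding lab_equiv_def by blast
  then have i_to_j: "\<phi> (\<sigma> v, j) = \<phi> (v, i)" if "v \<in> V" for v
    using that auts_mem[OF \<sigma>] by (simp add: copy_labeling_def)
  have j_to_i: "\<phi> (inv \<sigma> v, i) = \<phi> (v, j)" if "v \<in> V" for v
    using i_to_j[OF auts_mem[OF auts_inv[OF \<sigma>] that]] auts_bij[OF \<sigma>]
    by (simp add: bij_is_surj surj_f_inv_f)
  have "preserves (copies_V V \<alpha>) (copy_swap V \<sigma> i j) \<phi>"
    using i_to_j j_to_i by (auto simp: preserves_def copy_swap_def copies_V_def)
  then have "copy_swap V \<sigma> i j = id"
    using \<phi> copy_swap_in_auts[OF \<sigma> ij] unfolding distinguishing_def by blast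
  moreover obtain v where "v \<in> V" using assms(1) by blast
  ultimately show False
    using fun_cong[of _ _ "(v, i)"] \<open>i \<noteq> j\<close> by (fastforce simp: copy_swap_def)
qed

lemma auts_copies_snd_eq:
  assumes conn: "connected_graph V E" and \<pi>: "\<pi> \<in> auts (copies_V V \<alpha>) (copies_E E)"
    and "i < \<alpha>" "u \<in> V" "v \<in> V"
  shows "snd (\<pi> (v, i)) = snd (\<pi> (u, i))"
proof -
  have "(u, v) \<in> {(x, y). x \<in> V \<and> y \<in> V \<and> E x y}\<^sup>*"
    using conn assms(4,5) unfolding connected_graph_def by blast
  then show ?thesis
  proof (induction rule: rtrancl_induct)
    case (step y z)
    then have "copies_E E (y, i) (z, i)" and "(y, i) \<in> copies_V V \<alpha>" "(z, i) \<in> copies_V V \<alpha>"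
      using \<open>i < \<alpha>\<close> by (auto simp: copies_E_def copies_V_def)
    then have "copies_E E (\<pi> (y, i)) (\<pi> (z, i))"
      using auts_edge_iff[OF \<pi>] by blast
    with step.IH show ?case by (simp add: copies_E_def)
  qed simp
qed

lemma auts_copies_on_copy:
  assumes fin: "finite V" and conn: "connected_graph V E"
    and \<pi>: "\<pi> \<in> auts (copies_V V \<alpha>) (copies_E E)" and i: "i < \<alpha>"
  obtains j \<sigma> where "j < \<alpha>" "\<sigma> \<in> auts V E" "\<And>v. v \<in> V \<Longrightarrow> \<pi> (v, i) = (\<sigma> v, j)"
proof -
  obtain v\<^sub>0 where v\<^sub>0: "v\<^sub>0 \<in> V" using conn unfolding connected_graph_def by blast
  define j where "j = snd (\<pi> (v\<^sub>0, i))"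
  define \<sigma> where "\<sigma> v = (if v \<in> V then fst (\<pi> (v, i)) else v)" for v
  have in_copy: "(v, i) \<in> copies_V V \<alpha>" if "v \<in> V" for v
    using that i by (simp add: copies_V_def)
  have \<pi>\<sigma>: "\<pi> (v, i) = (\<sigma> v, j)" if "v \<in> V" for v
    using auts_copies_snd_eq[OF conn \<pi> i v\<^sub>0 that] that by (simp add: \<sigma>_def j_def prod_eq_iff)
  have "(\<sigma> v, j) \<in> copies_V V \<alpha>" if "v \<in> V" for v
    using auts_mem[OF \<pi> in_copy[OF that]] \<pi>\<sigma>[OF that] by simp
  then have j: "j < \<alpha>" and \<sigma>_mem: "\<And>v. v \<in> V \<Longrightarrow> \<sigma> v \<in> V"
    using v\<^sub>0 by (auto simp: copies_V_def)
  have "inj_on \<sigma> V"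
  proof (rule inj_onI)
    fix u v assume "u \<in> V" "v \<in> V" "\<sigma> u = \<sigma> v"
    then have "\<pi> (u, i) = \<pi> (v, i)" using \<pi>\<sigma> by simp
    then show "u = v" using auts_bij[OF \<pi>] by (simp add: bij_is_inj inj_eq)
  qed
  then have "bij_betw \<sigma> V V"
    using endo_inj_surj[OF fin] \<sigma>_mem by (auto simp: bij_betw_def)
  moreover have "\<sigma> x = x" if "x \<notin> V" for x
    using that by (simp add: \<sigma>_def)
  moreover have "E u v \<longleftrightarrow> E (\<sigma> u) (\<sigma> v)" if "u \<in> V" "v \<in> V" for u v
    using auts_edge_iff[OF \<pi> in_copy in_copy, OF that] \<pi>\<sigma> that by (simp add: copies_E_def)
  ultimately have "\<sigma> \<in> auts V E"
    unfolding auts_def by blast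
  with j \<pi>\<sigma> that show ?thesis by blast
qed

lemma glue_labelings_distinguishing:
  assumes fin: "finite V" and conn: "connected_graph V E"
    and \<psi>: "\<And>i. i < \<alpha> \<Longrightarrow> \<psi> i \<in> dist_labelings V E k"
    and ineq: "\<And>i j. i < \<alpha> \<Longrightarrow> j < \<alpha> \<Longrightarrow> (\<psi> i, \<psi> j) \<in> lab_equiv V E k \<Longrightarrow> i = j"
  shows "distinguishing (copies_V V \<alpha>) (copies_E E) k (glue_labelings V \<alpha> \<psi>)"
proof -
  let ?\<phi> = "glue_labelings V \<alpha> \<psi>"
  have fixes_copies: "\<pi> x = x" if \<pi>: "\<pi> \<in> auts (copies_V V \<alpha>) (copies_E E)"
    and pres: "preserves (copies_V V \<alpha>) \<pi> ?\<phi>" and x: "x \<in> copies_V V \<alpha>" for \<pi> x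
  proof -
    obtain v i where x: "x = (v, i)" "v \<in> V" "i < \<alpha>" using x by (auto simp: copies_V_def)
    obtain j \<sigma> where j: "j < \<alpha>" and \<sigma>: "\<sigma> \<in> auts V E"
      and \<pi>\<sigma>: "\<And>u. u \<in> V \<Longrightarrow> \<pi> (u, i) = (\<sigma> u, j)"
      using auts_copies_on_copy[OF fin conn \<pi> x(3)] by blast
    have \<psi>\<sigma>: "\<psi> j (\<sigma> u) = \<psi> i u" if "u \<in> V" for u
    proof -
      have "?\<phi> (\<pi> (u, i)) = ?\<phi> (u, i)"
        using pres that x(3) by (simp add: preserves_def copies_V_def)
      then show ?thesis
        using \<pi>\<sigma>[OF that] auts_mem[OF \<sigma> that] that j x(3)
        by (simp add: glue_labelings_def copies_V_def)
    qed
    then have "(\<psi> i, \<psi> j) \<in> lab_equiv V E k"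
      using \<psi> x(3) j \<sigma> unfolding lab_equiv_def by blast
    then have "j = i" using ineq x(3) j by blast
    then have "preserves V \<sigma> (\<psi> i)"
      using \<psi>\<sigma> by (simp add: preserves_def)
    then have "\<sigma> = id"
      using \<psi>[OF x(3)] \<sigma> unfolding dist_labelings_def distinguishing_def by blast
    then show ?thesis using \<pi>\<sigma>[OF x(2)] x \<open>j = i\<close> by simp
  qed
  have "\<pi> = id" if "\<pi> \<in> auts (copies_V V \<alpha>) (copies_E E)" "preserves (copies_V V \<alpha>) \<pi> ?\<phi>" for \<pi>
  proof
    fix x show "\<pi> x = id x"
      using fixes_copies[OF that] auts_fixes[OF that(1)] by (cases "x \<in> copies_V V \<alpha>") auto
  qed
  moreover have "?\<phi> \<in> labelings (copies_V V \<alpha>) k"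
    using \<psi> glue_labelings_in_labelings unfolding dist_labelings_def distinguishing_def by blast
  ultimately show ?thesis unfolding distinguishing_def by blast
qed

lemma ex_distinguishing_copies_iff:
  assumes "finite V" and "connected_graph V E"
  shows "(\<exists>\<phi>. distinguishing (copies_V V \<alpha>) (copies_E E) k \<phi>) \<longleftrightarrow>
           (\<exists>\<psi>. (\<forall>i<\<alpha>. \<psi> i \<in> dist_labelings V E k) \<and>
                 (\<forall>i<\<alpha>. \<forall>j<\<alpha>. (\<psi> i, \<psi> j) \<in> lab_equiv V E k \<longrightarrow> i = j))"
    (is "?copies \<longleftrightarrow> ?family")
proof
  assume ?copies
  then obtain \<phi> where \<phi>: "distinguishing (copies_V V \<alpha>) (copies_E E) k \<phi>" ..
  have "V \<noteq> {}" using assms(2) unfolding connected_graph_def by blast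
  then show ?family
    using copy_labeling_distinguishing[OF \<phi>] copy_labelings_inequivalent[OF _ \<phi>] by blast
next
  assume ?family
  then show ?copies using glue_labelings_distinguishing[OF assms] by blast
qed

theorem lemma3:
  fixes V :: "'a set" and E :: "'a \<Rightarrow> 'a \<Rightarrow> bool" and \<alpha> :: nat
  assumes "simple_graph V E" and "connected_graph V E" and "\<alpha> \<ge> 1"
  shows "dist_number (copies_V V \<alpha>) (copies_E E) = (LEAST k. D_count V E k \<ge> \<alpha>)"
proof -
  have fin: "finite V" using assms(1) unfolding simple_graph_def by blast
  have "(\<exists>\<phi>. distinguishing (copies_V V \<alpha>) (copies_E E) k \<phi>) \<longleftrightarrow> D_count V E k \<ge> \<alpha>" for k
    unfolding ex_distinguishing_copies_iff[OF fin assms(2)] D_count_def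
    by (rule le_card_quotient_iff[OF equiv_lab_equiv finite_dist_labelings[OF fin], symmetric])
  then show ?thesis unfolding dist_number_def by simp
qed

end
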